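(* Let $\mathcal{R}$ be a non-commutative prime ring of characteristic different from $2$, with Utumi quotient ring $\mathcal{U}$ and extended centroid $\mathcal{C}$, and let $f(\zeta_1,\ldots,\zeta_n)$ be a multilinear polynomial over $\mathcal{C}$ which is not central-valued on $\mathcal{R}$. Let $a_1,\ldots,a_6\in\mathcal{U}$ be such that $$a_1f(\zeta)^2+a_2f(\zeta)a_3f(\zeta)+f(\zeta)a_5f(\zeta)a_6+f(\zeta)a_4f(\zeta)-a_5f(\zeta)^2a_6=0$$ for all $\zeta=(\zeta_1,\ldots,\zeta_n)\in\mathcal{R}^n$. If $\mathcal{R}$ does not satisfy any nontrivial generalized polynomial identity, then one of the following holds: (1) $a_2,a_5\in\mathcal{C}$; (2) $a_2,a_6\in\mathcal{C}$; (3) $a_3,a_5\in\mathcal{C}$; (4) $a_3,a_6\in\mathcal{C}$.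
   Context: A ring $\mathcal{R}$ is prime if $x\mathcal{R}y=0$ implies $x=0$ or $y=0$. $\mathcal{U}$ is the Utumi quotient ring of $\mathcal{R}$ and $\mathcal{C}$, its center, the extended centroid. A generalized polynomial identity is an element of the free product $\mathcal{U}*_{\mathcal{C}}\mathcal{C}\{X\}$ (noncommutative polynomials with coefficients from $\mathcal{U}$ interspersed) vanishing on all substitutions from $\mathcal{R}$; it is nontrivial if it is a nonzero element of that free product. A multilinear polynomial over $\mathcal{C}$ has each variable exactly once in every monomial; non-central means its values on $\mathcal{R}$ do not all lie in $\mathcal{C}$. *)

theory Defs
  imports "HOL-Combinatorics.Permutations"
begin

text \<open>The ambient type 'a (a unital ring) plays the role of the Utumi quotient ring U;
  the prime ring R is a (not necessarily unital) subring R :: 'a set.\<close>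

definition subring_of :: "'a::ring_1 set \<Rightarrow> bool" where
  "subring_of R \<longleftrightarrow> 0 \<in> R \<and> (\<forall>x\<in>R. \<forall>y\<in>R. x - y \<in> R \<and> x * y \<in> R)"

definition prime_ring :: "'a::ring_1 set \<Rightarrow> bool" where
  "prime_ring R \<longleftrightarrow> subring_of R \<and>
     (\<forall>x\<in>R. \<forall>y\<in>R. (\<forall>r\<in>R. x * r * y = 0) \<longrightarrow> x = 0 \<or> y = 0)"

definition noncommutative :: "'a::ring_1 set \<Rightarrow> bool" where
  "noncommutative R \<longleftrightarrow> (\<exists>x\<in>R. \<exists>y\<in>R. x * y \<noteq> y * x)"

definition char_not_2 :: "'a::ring_1 set \<Rightarrow> bool" where
  "char_not_2 R \<longleftrightarrow> \<not> (\<forall>x\<in>R. x + x = 0)"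

definition right_ideal_of :: "'a::ring_1 set \<Rightarrow> 'a set \<Rightarrow> bool" where
  "right_ideal_of R I \<longleftrightarrow> I \<subseteq> R \<and> 0 \<in> I \<and>
     (\<forall>x\<in>I. \<forall>y\<in>I. x - y \<in> I) \<and> (\<forall>x\<in>I. \<forall>r\<in>R. x * r \<in> I)"

definition dense_right_ideal :: "'a::ring_1 set \<Rightarrow> 'a set \<Rightarrow> bool" where
  "dense_right_ideal R I \<longleftrightarrow> right_ideal_of R I \<and>
     (\<forall>r1\<in>R. \<forall>r2\<in>R. r1 \<noteq> 0 \<longrightarrow> (\<exists>r\<in>R. r1 * r \<noteq> 0 \<and> r2 * r \<in> I))"

definition right_module_hom :: "'a::ring_1 set \<Rightarrow> 'a set \<Rightarrow> ('a \<Rightarrow> 'a) \<Rightarrow> bool" where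
  "right_module_hom R I \<phi> \<longleftrightarrow> (\<forall>x\<in>I. \<phi> x \<in> R) \<and>
     (\<forall>x\<in>I. \<forall>y\<in>I. \<phi> (x + y) = \<phi> x + \<phi> y) \<and>
     (\<forall>x\<in>I. \<forall>r\<in>R. \<phi> (x * r) = \<phi> x * r)"

text \<open>The whole type 'a is the Utumi (maximal right) quotient ring of R:
  Utumi's axiomatic characterisation, which determines it up to isomorphism over R.\<close>
definition is_utumi_quotient_ring :: "'a::ring_1 set \<Rightarrow> bool" where
  "is_utumi_quotient_ring R \<longleftrightarrow> subring_of R \<and>
     (\<forall>q. \<exists>I. dense_right_ideal R I \<and> (\<forall>x\<in>I. q * x \<in> R)) \<and>
     (\<forall>q I. dense_right_ideal R I \<and> (\<forall>x\<in>I. q * x = 0) \<longrightarrow> q = 0) \<and>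
     (\<forall>I \<phi>. dense_right_ideal R I \<and> right_module_hom R I \<phi> \<longrightarrow>
        (\<exists>q. \<forall>x\<in>I. \<phi> x = q * x))"

definition ext_centroid :: "'a::ring_1 set" where
  "ext_centroid = {c. \<forall>u. c * u = u * c}"

definition multilin_coeffs :: "nat \<Rightarrow> ((nat \<Rightarrow> nat) \<Rightarrow> 'a::ring_1) \<Rightarrow> bool" where
  "multilin_coeffs n \<alpha> \<longleftrightarrow> (\<forall>s. s permutes {..<n} \<longrightarrow> \<alpha> s \<in> ext_centroid)"

definition multilin_eval :: "nat \<Rightarrow> ((nat \<Rightarrow> nat) \<Rightarrow> 'a::ring_1) \<Rightarrow> (nat \<Rightarrow> 'a) \<Rightarrow> 'a" where
  "multilin_eval n \<alpha> z =
     (\<Sum>s\<in>{s. s permutes {..<n}}. \<alpha> s * prod_list (map (\<lambda>i. z (s i)) [0..<n]))"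

definition central_valued :: "'a::ring_1 set \<Rightarrow> nat \<Rightarrow> ((nat \<Rightarrow> nat) \<Rightarrow> 'a) \<Rightarrow> bool" where
  "central_valued R n \<alpha> \<longleftrightarrow>
     (\<forall>z. (\<forall>i<n. z i \<in> R) \<longrightarrow> multilin_eval n \<alpha> z \<in> ext_centroid)"

text \<open>Generalized polynomials: finite lists of generalized monomials
  u0 X_{w1} u1 X_{w2} ... X_{wk} uk, each given as (coefficient list [u0..uk], word [w1..wk]).\<close>
type_synonym 'a gpoly = "('a list \<times> nat list) list"

definition gpoly_wf :: "'a gpoly \<Rightarrow> bool" where
  "gpoly_wf P \<longleftrightarrow> (\<forall>(us, ws)\<in>set P. length us = Suc (length ws))"

definition gmono_eval :: "'a::ring_1 list \<Rightarrow> nat list \<Rightarrow> (nat \<Rightarrow> 'a) \<Rightarrow> 'a" where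
  "gmono_eval us ws z = hd us * prod_list (map2 (\<lambda>w u. z w * u) ws (tl us))"

definition gpoly_eval :: "'a::ring_1 gpoly \<Rightarrow> (nat \<Rightarrow> 'a) \<Rightarrow> 'a" where
  "gpoly_eval P z = sum_list (map (\<lambda>(us, ws). gmono_eval us ws z) P)"

definition C_functional :: "('a::ring_1 \<Rightarrow> 'a) \<Rightarrow> bool" where
  "C_functional \<phi> \<longleftrightarrow> (\<forall>x. \<phi> x \<in> ext_centroid) \<and> (\<forall>x y. \<phi> (x + y) = \<phi> x + \<phi> y) \<and>
     (\<forall>c\<in>ext_centroid. \<forall>x. \<phi> (c * x) = c * \<phi> x)"

text \<open>P is zero in U *_C C{X} = (direct sum over words w of U \<otimes>_C ... \<otimes>_C U) iff, for every
  word w, the tensor collected from the monomials with word w vanishes; over the field C a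
  tensor vanishes iff all products of C-linear functionals U \<rightarrow> C annihilate it.\<close>
definition gpoly_zero :: "'a::ring_1 gpoly \<Rightarrow> bool" where
  "gpoly_zero P \<longleftrightarrow> (\<forall>w \<phi>. (\<forall>i. C_functional (\<phi> i)) \<longrightarrow>
     sum_list (map (\<lambda>(us, ws). prod_list (map2 \<phi> [0..<length us] us))
                   (filter (\<lambda>(us, ws). ws = w) P)) = 0)"

definition satisfies_nontrivial_GPI :: "'a::ring_1 set \<Rightarrow> bool" where
  "satisfies_nontrivial_GPI R \<longleftrightarrow> (\<exists>P. gpoly_wf P \<and> \<not> gpoly_zero P \<and>
     (\<forall>z. (\<forall>i. z i \<in> R) \<longrightarrow> gpoly_eval P z = 0))"

end

theory Submission
  imports Defs
begin

(* Writing m_s for the monomial X_(s 0) ... X_(s (n-1)), so that f = sum_s alpha_s m_s, the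
   left-hand side of the identity expands to the generalized polynomial
     sum over (u0, u1, u2) in T, sum over s, t of  u0 alpha_s alpha_t m_s u1 m_t u2,
   with T = [(a1,1,1), (a2,a3,1), (1,a5,a6), (1,a4,1), (-a5,1,a6)].  Since R satisfies no
   nontrivial GPI, this element of U *_C C{X} is zero, so the tensor collected at the word of
   m_s0 m_s0, where alpha_s0 <> 0, vanishes:
     alpha_s0^2 * sum over (u0, u1, u2) in T of u0 (x) u1 (x) u2 = 0   in U (x)_C U (x)_C U.
   The extended centroid C of a prime ring is a field, so C-linear functionals U -> C separate
   any x outside C from 1.  If a2, a3 are not in C, functionals A, B vanishing at 1 with
   A a2 = B a3 = 1 map this tensor under A (x) B (x) E (E 1 = 1) to alpha_s0^2; if a5, a6 are not
   in C, the analogous choice for a5, a6 gives -alpha_s0^2.  Both are nonzero. *)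

section \<open>The extended centroid is a field\<close>

lemma ext_centroid_commute: "c \<in> ext_centroid \<Longrightarrow> c * u = u * c"
  by (simp add: ext_centroid_def)

lemma zero_in_ext_centroid [simp]: "0 \<in> ext_centroid"
  and one_in_ext_centroid [simp]: "1 \<in> ext_centroid"
  by (simp_all add: ext_centroid_def)

lemma ext_centroid_add: "c \<in> ext_centroid \<Longrightarrow> d \<in> ext_centroid \<Longrightarrow> c + d \<in> ext_centroid"
  and ext_centroid_diff: "c \<in> ext_centroid \<Longrightarrow> d \<in> ext_centroid \<Longrightarrow> c - d \<in> ext_centroid"
  and ext_centroid_uminus: "c \<in> ext_centroid \<Longrightarrow> - c \<in> ext_centroid"
  by (simp_all add: ext_centroid_def algebra_simps)

lemma ext_centroid_mult:
  assumes "c \<in> ext_centroid" and "d \<in> ext_centroid"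
  shows "c * d \<in> ext_centroid"
  unfolding ext_centroid_def
proof (intro CollectI allI)
  fix u
  have "c * d * u = c * (u * d)" using ext_centroid_commute[OF assms(2)] by (simp add: mult.assoc)
  also have "\<dots> = u * (c * d)" using ext_centroid_commute[OF assms(1)] by (metis mult.assoc)
  finally show "c * d * u = u * (c * d)" .
qed

lemma ext_centroid_mult_eq_0D:
  fixes c y :: "'a::ring_1"
  assumes field: "\<And>d::'a. d \<in> ext_centroid \<Longrightarrow> d \<noteq> 0 \<Longrightarrow> \<exists>q\<in>ext_centroid. d * q = 1"
    and "c \<in> ext_centroid" "c \<noteq> 0" "c * y = 0"
  shows "y = 0"
proof -
  obtain q where "q \<in> ext_centroid" "c * q = 1" using field assms(2,3) by blast
  then have "q * c = 1" using ext_centroid_commute[OF assms(2)] by simp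
  then have "y = q * (c * y)" by (simp add: mult.assoc[symmetric])
  with assms(4) show ?thesis by simp
qed

lemma subring_ofD:
  assumes "subring_of R"
  shows subring_of_zero: "0 \<in> R"
    and subring_of_diff: "x \<in> R \<Longrightarrow> y \<in> R \<Longrightarrow> x - y \<in> R"
    and subring_of_mult: "x \<in> R \<Longrightarrow> y \<in> R \<Longrightarrow> x * y \<in> R"
  using assms unfolding subring_of_def by blast+

lemma subring_of_add:
  assumes "subring_of R" "x \<in> R" "y \<in> R"
  shows "x + y \<in> R"
proof -
  have "0 - y \<in> R" using subring_ofD[OF assms(1)] assms(3) by blast
  then show ?thesis using subring_of_diff[OF assms(1) assms(2)] by fastforce
qed

lemma prime_ring_subring: "prime_ring R \<Longrightarrow> subring_of R"
  by (simp add: prime_ring_def)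

lemma prime_ringD:
  "prime_ring R \<Longrightarrow> x \<in> R \<Longrightarrow> y \<in> R \<Longrightarrow> (\<And>r. r \<in> R \<Longrightarrow> x * r * y = 0) \<Longrightarrow> x = 0 \<or> y = 0"
  unfolding prime_ring_def by blast

definition multiplier_ideal :: "'a::ring_1 set \<Rightarrow> 'a \<Rightarrow> 'a set" where
  "multiplier_ideal R c = {x \<in> R. c * x \<in> R}"

lemma multiplier_ideal_closed:
  assumes R: "subring_of R" and c: "c \<in> ext_centroid"
  shows multiplier_ideal_zero: "0 \<in> multiplier_ideal R c"
    and multiplier_ideal_diff:
      "x \<in> multiplier_ideal R c \<Longrightarrow> y \<in> multiplier_ideal R c \<Longrightarrow> x - y \<in> multiplier_ideal R c"
    and multiplier_ideal_add:
      "x \<in> multiplier_ideal R c \<Longrightarrow> y \<in> multiplier_ideal R c \<Longrightarrow> x + y \<in> multiplier_ideal R c"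
    and multiplier_ideal_mult_left:
      "x \<in> multiplier_ideal R c \<Longrightarrow> r \<in> R \<Longrightarrow> r * x \<in> multiplier_ideal R c"
    and multiplier_ideal_mult_right:
      "x \<in> multiplier_ideal R c \<Longrightarrow> r \<in> R \<Longrightarrow> x * r \<in> multiplier_ideal R c"
proof -
  show "0 \<in> multiplier_ideal R c" using subring_of_zero[OF R] by (simp add: multiplier_ideal_def)
  show "x - y \<in> multiplier_ideal R c" if "x \<in> multiplier_ideal R c" "y \<in> multiplier_ideal R c"
    using that subring_of_diff[OF R] by (simp add: multiplier_ideal_def right_diff_distrib)
  show "x + y \<in> multiplier_ideal R c" if "x \<in> multiplier_ideal R c" "y \<in> multiplier_ideal R c"
    using that subring_of_add[OF R] by (simp add: multiplier_ideal_def distrib_left)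
  show "r * x \<in> multiplier_ideal R c" if "x \<in> multiplier_ideal R c" "r \<in> R"
  proof -
    have "c * (r * x) = r * (c * x)" using ext_centroid_commute[OF c] by (metis mult.assoc)
    then show ?thesis using that subring_of_mult[OF R] by (simp add: multiplier_ideal_def)
  qed
  show "x * r \<in> multiplier_ideal R c" if "x \<in> multiplier_ideal R c" "r \<in> R"
    using that subring_of_mult[OF R] by (simp add: multiplier_ideal_def mult.assoc[symmetric])
qed

lemma prime_ring_central_mult_eq_0:
  assumes "prime_ring R" "c \<in> ext_centroid"
    and "y \<in> R" "c * y \<in> R" "c * y \<noteq> 0" "x \<in> R" "c * x = 0"
  shows "x = 0"
proof -
  have "c * y * r * x = y * r * (c * x)" for r
    using ext_centroid_commute[OF assms(2)] by (metis mult.assoc)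
  then show ?thesis using prime_ringD[OF assms(1) assms(4,6)] assms(5,7) by auto
qed

lemma right_ideal_central_image:
  assumes "subring_of R" "c \<in> ext_centroid"
  shows "right_ideal_of R ((*) c ` multiplier_ideal R c)"
  unfolding right_ideal_of_def
proof (intro conjI ballI)
  show "(*) c ` multiplier_ideal R c \<subseteq> R" by (auto simp: multiplier_ideal_def)
  show "0 \<in> (*) c ` multiplier_ideal R c"
    using multiplier_ideal_zero[OF assms] by (metis image_eqI mult_zero_right)
next
  fix k l assume "k \<in> (*) c ` multiplier_ideal R c" "l \<in> (*) c ` multiplier_ideal R c"
  then obtain x y where "x \<in> multiplier_ideal R c" "y \<in> multiplier_ideal R c"
    and "k = c * x" "l = c * y"
    by blast
  then show "k - l \<in> (*) c ` multiplier_ideal R c"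
    using multiplier_ideal_diff[OF assms] by (auto simp: right_diff_distrib[symmetric])
next
  fix k r assume "k \<in> (*) c ` multiplier_ideal R c" "r \<in> R"
  then obtain x where "x \<in> multiplier_ideal R c" "k = c * x" by blast
  then show "k * r \<in> (*) c ` multiplier_ideal R c"
    using multiplier_ideal_mult_right[OF assms _ \<open>r \<in> R\<close>] by (auto simp: mult.assoc)
qed

lemma central_image_mult_left:
  assumes "subring_of R" "c \<in> ext_centroid" "k \<in> (*) c ` multiplier_ideal R c" "r \<in> R"
  shows "r * k \<in> (*) c ` multiplier_ideal R c"
proof -
  obtain x where "x \<in> multiplier_ideal R c" "k = c * x" using assms(3) by blast
  moreover have "r * (c * x) = c * (r * x)"
    using ext_centroid_commute[OF assms(2)] by (metis mult.assoc)
  ultimately show ?thesis using multiplier_ideal_mult_left[OF assms(1,2) _ assms(4)] by auto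
qed

lemma dense_right_ideal_central_image:
  assumes prime: "prime_ring R" and c: "c \<in> ext_centroid"
    and y0: "y0 \<in> multiplier_ideal R c" "c * y0 \<noteq> 0"
  shows "dense_right_ideal R ((*) c ` multiplier_ideal R c)" (is "dense_right_ideal R ?K")
proof -
  note R = prime_ring_subring[OF prime]
  have "c * y0 \<in> ?K" "c * y0 \<in> R" using y0(1) by (auto simp: multiplier_ideal_def)
  have nondegenerate: "\<exists>k\<in>?K. r1 * k \<noteq> 0" if "r1 \<in> R" "r1 \<noteq> 0" for r1
  proof (rule ccontr)
    assume none: "\<not> ?thesis"
    have "r1 * r * (c * y0) = 0" if "r \<in> R" for r
    proof -
      have "r * (c * y0) \<in> ?K" using central_image_mult_left[OF R c \<open>c * y0 \<in> ?K\<close> that] .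
      then have "r1 * (r * (c * y0)) = 0" using none by blast
      then show ?thesis by (simp add: mult.assoc)
    qed
    then show False using prime_ringD[OF prime \<open>r1 \<in> R\<close> \<open>c * y0 \<in> R\<close>] that(2) y0(2) by blast
  qed
  have "\<exists>r\<in>R. r1 * r \<noteq> 0 \<and> r2 * r \<in> ?K" if "r1 \<in> R" "r2 \<in> R" "r1 \<noteq> 0" for r1 r2
  proof -
    obtain k where "k \<in> ?K" "r1 * k \<noteq> 0" using nondegenerate \<open>r1 \<in> R\<close> \<open>r1 \<noteq> 0\<close> by blast
    moreover have "k \<in> R" using \<open>k \<in> ?K\<close> by (auto simp: multiplier_ideal_def)
    ultimately show ?thesis using central_image_mult_left[OF R c _ \<open>r2 \<in> R\<close>] by blast
  qed
  then show ?thesis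
    using right_ideal_central_image[OF R c] unfolding dense_right_ideal_def by blast
qed

lemma central_image_inverse_hom:
  assumes prime: "prime_ring R" and c: "c \<in> ext_centroid"
    and y0: "y0 \<in> multiplier_ideal R c" "c * y0 \<noteq> 0"
  obtains \<phi> where "right_module_hom R ((*) c ` multiplier_ideal R c) \<phi>"
    and "\<And>x. x \<in> multiplier_ideal R c \<Longrightarrow> \<phi> (c * x) = x"
proof
  note R = prime_ring_subring[OF prime]
  define \<phi> where "\<phi> k = (THE x. x \<in> multiplier_ideal R c \<and> k = c * x)" for k
  show \<phi>: "\<phi> (c * x) = x" if "x \<in> multiplier_ideal R c" for x
    unfolding \<phi>_def
  proof (rule the_equality)
    fix x' assume x': "x' \<in> multiplier_ideal R c \<and> c * x = c * x'"
    then have "x' - x \<in> R" "c * (x' - x) = 0"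
      using multiplier_ideal_diff[OF R c _ that]
      by (auto simp: multiplier_ideal_def right_diff_distrib)
    then have "x' - x = 0"
      using y0 prime_ring_central_mult_eq_0[OF prime c, of y0 "x' - x"]
      by (simp add: multiplier_ideal_def)
    then show "x' = x" by simp
  qed (use that in simp)
  show "right_module_hom R ((*) c ` multiplier_ideal R c) \<phi>"
    unfolding right_module_hom_def
    using \<phi> multiplier_ideal_add[OF R c] multiplier_ideal_mult_right[OF R c]
    by (auto simp: multiplier_ideal_def distrib_left[symmetric] mult.assoc)
qed

text \<open>Left multiplication by c is injective on the ideal multiplier_ideal R c; its inverse is a
  homomorphism of right R-modules on a dense right ideal, hence left multiplication by some
  q \<in> U, and q turns out to be central.\<close>

lemma ext_centroid_inverse:
  fixes R :: "'a::ring_1 set" and c :: 'a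
  assumes prime: "prime_ring R" and utumi: "is_utumi_quotient_ring R"
    and c: "c \<in> ext_centroid" and "c \<noteq> 0"
  shows "\<exists>q\<in>ext_centroid. c * q = 1"
proof -
  have zero_on_dense: "q = 0" if "dense_right_ideal R I" "\<forall>x\<in>I. q * x = 0" for q I
    using utumi that unfolding is_utumi_quotient_ring_def by blast
  obtain I where I: "dense_right_ideal R I" and cI: "\<forall>x\<in>I. c * x \<in> R"
    using utumi unfolding is_utumi_quotient_ring_def by blast
  have I_sub: "I \<subseteq> multiplier_ideal R c"
    using I cI unfolding dense_right_ideal_def right_ideal_of_def multiplier_ideal_def by blast
  obtain y0 where "y0 \<in> I" "c * y0 \<noteq> 0" using zero_on_dense[OF I] \<open>c \<noteq> 0\<close> by blast
  then have y0: "y0 \<in> multiplier_ideal R c" "c * y0 \<noteq> 0" using I_sub by auto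
  obtain \<phi> where hom: "right_module_hom R ((*) c ` multiplier_ideal R c) \<phi>"
    and \<phi>: "\<And>x. x \<in> multiplier_ideal R c \<Longrightarrow> \<phi> (c * x) = x"
    using central_image_inverse_hom[OF prime c y0] by blast
  then obtain q where q: "\<forall>k\<in>(*) c ` multiplier_ideal R c. \<phi> k = q * k"
    using utumi dense_right_ideal_central_image[OF prime c y0]
    unfolding is_utumi_quotient_ring_def by blast
  have "(q * c - 1) * x = 0" if "x \<in> I" for x
  proof -
    have "x = q * (c * x)" using q \<phi> I_sub that by fastforce
    then show ?thesis by (simp add: left_diff_distrib mult.assoc)
  qed
  then have "q * c - 1 = 0" using zero_on_dense[OF I] by blast
  then have qc: "q * c = 1" by simp
  have "q * u = u * q" for u
  proof -
    have "q * u = q * u * (c * q)" using qc ext_centroid_commute[OF c] by simp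
    also have "\<dots> = q * (c * u) * q" using ext_centroid_commute[OF c, of u] by (simp add: mult.assoc)
    finally show ?thesis using qc by (simp add: mult.assoc[symmetric])
  qed
  then have "q \<in> ext_centroid" unfolding ext_centroid_def by blast
  then show ?thesis using qc ext_centroid_commute[OF c] by auto
qed

section \<open>C-linear functionals on U\<close>

definition partial_C_functional :: "('a::ring_1 \<times> 'a) set \<Rightarrow> bool" where
  "partial_C_functional G \<longleftrightarrow> (0, 0) \<in> G \<and> (\<forall>x v. (x, v) \<in> G \<longrightarrow> v \<in> ext_centroid) \<and>
     (\<forall>x v y w. (x, v) \<in> G \<longrightarrow> (y, w) \<in> G \<longrightarrow> (x + y, v + w) \<in> G) \<and>
     (\<forall>x v c. (x, v) \<in> G \<longrightarrow> c \<in> ext_centroid \<longrightarrow> (c * x, c * v) \<in> G) \<and>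
     (\<forall>x v w. (x, v) \<in> G \<longrightarrow> (x, w) \<in> G \<longrightarrow> w = v)"

lemma partial_C_functionalD:
  assumes "partial_C_functional G"
  shows partial_C_functional_zero: "(0, 0) \<in> G"
    and partial_C_functional_value: "(x, v) \<in> G \<Longrightarrow> v \<in> ext_centroid"
    and partial_C_functional_add: "(x, v) \<in> G \<Longrightarrow> (y, w) \<in> G \<Longrightarrow> (x + y, v + w) \<in> G"
    and partial_C_functional_scale: "(x, v) \<in> G \<Longrightarrow> c \<in> ext_centroid \<Longrightarrow> (c * x, c * v) \<in> G"
    and partial_C_functional_unique: "(x, v) \<in> G \<Longrightarrow> (x, w) \<in> G \<Longrightarrow> w = v"
  using assms unfolding partial_C_functional_def by blast+

lemma partial_C_functional_diff:
  assumes G: "partial_C_functional G" and "(x, v) \<in> G" "(y, w) \<in> G"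
  shows "(x - y, v - w) \<in> G"
proof -
  have "(-1 * y, -1 * w) \<in> G"
    using partial_C_functional_scale[OF G assms(3) ext_centroid_uminus[OF one_in_ext_centroid]] .
  from partial_C_functional_add[OF G assms(2) this] show ?thesis by simp
qed

lemma partial_C_functional_Union_chain:
  assumes "Ch \<noteq> {}" and chain: "subset.chain {G. partial_C_functional G} Ch"
  shows "partial_C_functional (\<Union>Ch)"
proof -
  have common: "\<exists>G\<in>Ch. p \<in> G \<and> q \<in> G" if "p \<in> \<Union>Ch" "q \<in> \<Union>Ch" for p q
    using finite_subset_Union_chain[of "{p, q}" Ch, OF _ _ \<open>Ch \<noteq> {}\<close> chain] that by auto
  have G: "partial_C_functional G" if "G \<in> Ch" for G
    using chain that unfolding subset_chain_def by blast
  obtain G0 where "G0 \<in> Ch" using \<open>Ch \<noteq> {}\<close> by blast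
  show ?thesis
    unfolding partial_C_functional_def
  proof (intro conjI allI impI)
    show "(0, 0) \<in> \<Union>Ch" using G[OF \<open>G0 \<in> Ch\<close>] \<open>G0 \<in> Ch\<close> partial_C_functional_zero by blast
  next
    fix x v :: 'a assume "(x, v) \<in> \<Union>Ch"
    then show "v \<in> ext_centroid" using G partial_C_functional_value by blast
  next
    fix x v y w :: 'a assume "(x, v) \<in> \<Union>Ch" "(y, w) \<in> \<Union>Ch"
    then obtain H where "H \<in> Ch" "(x, v) \<in> H" "(y, w) \<in> H" using common by blast
    then show "(x + y, v + w) \<in> \<Union>Ch" using G partial_C_functional_add by blast
  next
    fix x v c :: 'a assume "(x, v) \<in> \<Union>Ch" "c \<in> ext_centroid"
    then show "(c * x, c * v) \<in> \<Union>Ch" using G partial_C_functional_scale by blast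
  next
    fix x v w :: 'a assume "(x, v) \<in> \<Union>Ch" "(x, w) \<in> \<Union>Ch"
    then obtain H where "H \<in> Ch" "(x, v) \<in> H" "(x, w) \<in> H" using common by blast
    then show "w = v" using G partial_C_functional_unique by blast
  qed
qed

lemma partial_C_functional_independent:
  fixes M :: "('a::ring_1 \<times> 'a) set"
  assumes field: "\<And>d::'a. d \<in> ext_centroid \<Longrightarrow> d \<noteq> 0 \<Longrightarrow> \<exists>q\<in>ext_centroid. d * q = 1"
    and M: "partial_C_functional M" and x: "\<forall>v. (x, v) \<notin> M"
    and "(z1, v1) \<in> M" "(z2, v2) \<in> M" "c1 \<in> ext_centroid" "c2 \<in> ext_centroid"
    and eq: "z1 + c1 * x = z2 + c2 * x"
  shows "c1 = c2"
proof (rule ccontr)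
  assume "c1 \<noteq> c2"
  then have d: "c1 - c2 \<in> ext_centroid" "c1 - c2 \<noteq> 0" using ext_centroid_diff assms(6,7) by auto
  then obtain q where q: "q \<in> ext_centroid" "(c1 - c2) * q = 1" using field by blast
  then have "q * (c1 - c2) = 1" using ext_centroid_commute[OF d(1)] by simp
  moreover have "(c1 - c2) * x = z2 - z1" using eq by (simp add: algebra_simps)
  ultimately have "x = q * (z2 - z1)" by (metis mult.assoc mult_1)
  moreover have "(q * (z2 - z1), q * (v2 - v1)) \<in> M"
    using partial_C_functional_scale[OF M partial_C_functional_diff[OF M assms(5,4)] q(1)] .
  ultimately show False using x by simp
qed

lemma partial_C_functional_adjoin:
  fixes M :: "('a::ring_1 \<times> 'a) set"
  assumes field: "\<And>d::'a. d \<in> ext_centroid \<Longrightarrow> d \<noteq> 0 \<Longrightarrow> \<exists>q\<in>ext_centroid. d * q = 1"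
    and M: "partial_C_functional M" and x: "\<forall>v. (x, v) \<notin> M" and q: "q \<in> ext_centroid"
  shows "partial_C_functional {(z + c * x, v + c * q) | z v c. (z, v) \<in> M \<and> c \<in> ext_centroid}"
proof -
  define M' where "M' = {(z + c * x, v + c * q) | z v c. (z, v) \<in> M \<and> c \<in> ext_centroid}"
  have M'I: "(z + c * x, v + c * q) \<in> M'" if "(z, v) \<in> M" "c \<in> ext_centroid" for z v c
    unfolding M'_def using that by blast
  have M'E: "\<exists>z v c. y = z + c * x \<and> w = v + c * q \<and> (z, v) \<in> M \<and> c \<in> ext_centroid"
    if "(y, w) \<in> M'" for y w
    using that unfolding M'_def by blast
  have "partial_C_functional M'"
    unfolding partial_C_functional_def
  proof (intro conjI allI impI)
    show "(0, 0) \<in> M'" using M'I[OF partial_C_functional_zero[OF M] zero_in_ext_centroid] by simp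
  next
    fix y w :: 'a assume "(y, w) \<in> M'"
    then obtain z v c where "w = v + c * q" "(z, v) \<in> M" "c \<in> ext_centroid" using M'E by blast
    then show "w \<in> ext_centroid"
      using ext_centroid_add[OF partial_C_functional_value[OF M] ext_centroid_mult[OF _ q]] by simp
  next
    fix y w y' w' :: 'a assume "(y, w) \<in> M'" "(y', w') \<in> M'"
    obtain z v c where yw: "y = z + c * x" "w = v + c * q" "(z, v) \<in> M" "c \<in> ext_centroid"
      using M'E[OF \<open>(y, w) \<in> M'\<close>] by blast
    obtain z' v' c'
      where yw': "y' = z' + c' * x" "w' = v' + c' * q" "(z', v') \<in> M" "c' \<in> ext_centroid"
      using M'E[OF \<open>(y', w') \<in> M'\<close>] by blast
    have "((z + z') + (c + c') * x, (v + v') + (c + c') * q) \<in> M'"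
      using M'I[OF partial_C_functional_add[OF M yw(3) yw'(3)] ext_centroid_add[OF yw(4) yw'(4)]] .
    moreover note yw yw'
    ultimately show "(y + y', w + w') \<in> M'" by (simp add: algebra_simps)
  next
    fix y w e :: 'a assume "(y, w) \<in> M'" "e \<in> ext_centroid"
    then obtain z v c where "y = z + c * x" "w = v + c * q" "(z, v) \<in> M" "c \<in> ext_centroid"
      using M'E by blast
    moreover have "(e * z + (e * c) * x, e * v + (e * c) * q) \<in> M'"
      using calculation M'I partial_C_functional_scale[OF M] ext_centroid_mult \<open>e \<in> ext_centroid\<close>
      by blast
    ultimately show "(e * y, e * w) \<in> M'" by (simp add: algebra_simps)
  next
    fix y w w' :: 'a assume "(y, w) \<in> M'" "(y, w') \<in> M'"
    obtain z v c where yw: "y = z + c * x" "w = v + c * q" "(z, v) \<in> M" "c \<in> ext_centroid"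
      using M'E[OF \<open>(y, w) \<in> M'\<close>] by blast
    obtain z' v' c'
      where yw': "y = z' + c' * x" "w' = v' + c' * q" "(z', v') \<in> M" "c' \<in> ext_centroid"
      using M'E[OF \<open>(y, w') \<in> M'\<close>] by blast
    have "c = c'"
      using partial_C_functional_independent[OF field M x yw(3) yw'(3) yw(4) yw'(4)] yw(1) yw'(1)
      by simp
    moreover note yw yw'
    ultimately show "w' = w" using partial_C_functional_unique[OF M] by auto
  qed
  then show ?thesis unfolding M'_def .
qed

lemma partial_C_functional_not_maximal:
  fixes M :: "('a::ring_1 \<times> 'a) set"
  assumes field: "\<And>d::'a. d \<in> ext_centroid \<Longrightarrow> d \<noteq> 0 \<Longrightarrow> \<exists>q\<in>ext_centroid. d * q = 1"
    and M: "partial_C_functional M" and x: "\<forall>v. (x, v) \<notin> M"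
  shows "\<exists>M'. partial_C_functional M' \<and> M \<subset> M'"
proof -
  define M' where "M' = {(z + c * x, v + c * 0) | z v c. (z, v) \<in> M \<and> c \<in> ext_centroid}"
  have M'I: "(z + c * x, v + c * 0) \<in> M'" if "(z, v) \<in> M" "c \<in> ext_centroid" for z v c
    unfolding M'_def using that by blast
  have "M \<subseteq> M'"
  proof (rule subrelI)
    fix z v assume "(z, v) \<in> M"
    from M'I[OF this zero_in_ext_centroid] show "(z, v) \<in> M'" by simp
  qed
  moreover have "(x, 0) \<in> M'"
    using M'I[OF partial_C_functional_zero[OF M] one_in_ext_centroid] by simp
  then have "M \<noteq> M'" using x by blast
  moreover have "partial_C_functional M'"
    unfolding M'_def by (rule partial_C_functional_adjoin[OF field M x zero_in_ext_centroid])
  ultimately show ?thesis by blast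
qed

lemma total_partial_C_functional:
  assumes M: "partial_C_functional M" and total: "\<forall>x. \<exists>v. (x, v) \<in> M"
  shows "\<exists>\<phi>. C_functional \<phi> \<and> (\<forall>x v. (x, v) \<in> M \<longrightarrow> \<phi> x = v)"
proof -
  define \<phi> where "\<phi> x = (SOME v. (x, v) \<in> M)" for x
  have \<phi>M: "(x, \<phi> x) \<in> M" for x unfolding \<phi>_def using total by (metis someI_ex)
  have \<phi>: "\<phi> x = v" if "(x, v) \<in> M" for x v
    using partial_C_functional_unique[OF M that \<phi>M] .
  have "C_functional \<phi>"
    unfolding C_functional_def
  proof (intro conjI allI ballI)
    show "\<phi> x \<in> ext_centroid" for x using partial_C_functional_value[OF M \<phi>M] .
    show "\<phi> (x + y) = \<phi> x + \<phi> y" for x y using \<phi>[OF partial_C_functional_add[OF M \<phi>M \<phi>M]] .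
    show "\<phi> (c * x) = c * \<phi> x" if "c \<in> ext_centroid" for c x
      using \<phi>[OF partial_C_functional_scale[OF M \<phi>M that]] .
  qed
  then show ?thesis using \<phi> by blast
qed

lemma partial_C_functional_extends_to_C_functional:
  fixes G0 :: "('a::ring_1 \<times> 'a) set"
  assumes field: "\<And>d::'a. d \<in> ext_centroid \<Longrightarrow> d \<noteq> 0 \<Longrightarrow> \<exists>q\<in>ext_centroid. d * q = 1"
    and G0: "partial_C_functional G0"
  shows "\<exists>\<phi>. C_functional \<phi> \<and> (\<forall>x v. (x, v) \<in> G0 \<longrightarrow> \<phi> x = v)"
proof -
  define A where "A = {G. partial_C_functional G \<and> G0 \<subseteq> G}"
  have "\<exists>M\<in>A. \<forall>X\<in>A. M \<subseteq> X \<longrightarrow> X = M"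
  proof (rule subset_Zorn_nonempty)
    show "A \<noteq> {}" using G0 unfolding A_def by blast
  next
    fix Ch assume Ch: "Ch \<noteq> {}" "subset.chain A Ch"
    then have "subset.chain {G. partial_C_functional G} Ch" "\<forall>G\<in>Ch. G0 \<subseteq> G"
      unfolding subset_chain_def A_def by auto
    then have "partial_C_functional (\<Union>Ch)" "G0 \<subseteq> \<Union>Ch"
      using partial_C_functional_Union_chain Ch(1) by blast+
    then show "\<Union>Ch \<in> A" unfolding A_def by blast
  qed
  then obtain M where M: "partial_C_functional M" "G0 \<subseteq> M"
    and maximal: "\<And>X. partial_C_functional X \<Longrightarrow> M \<subseteq> X \<Longrightarrow> X = M"
    unfolding A_def by auto
  have "\<exists>v. (x, v) \<in> M" for x
  proof (rule ccontr)
    assume "\<nexists>v. (x, v) \<in> M"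
    then obtain M' where "partial_C_functional M'" "M \<subset> M'"
      using partial_C_functional_not_maximal[OF field M(1)] by blast
    then show False using maximal[of M'] by blast
  qed
  then obtain \<phi> where "C_functional \<phi>" "\<forall>x v. (x, v) \<in> M \<longrightarrow> \<phi> x = v"
    using total_partial_C_functional[OF M(1)] by blast
  then show ?thesis using M(2) by blast
qed

lemma C_functional_exists:
  fixes x :: "'a::ring_1"
  assumes field: "\<And>d::'a. d \<in> ext_centroid \<Longrightarrow> d \<noteq> 0 \<Longrightarrow> \<exists>q\<in>ext_centroid. d * q = 1"
    and x: "x \<notin> ext_centroid" and p: "p \<in> ext_centroid" and q: "q \<in> ext_centroid"
  shows "\<exists>\<phi>. C_functional \<phi> \<and> \<phi> 1 = p \<and> \<phi> x = q"
proof -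
  define M where "M = {(c, c * p) | c. c \<in> ext_centroid}"
  define M' where "M' = {(z + c * x, v + c * q) | z v c. (z, v) \<in> M \<and> c \<in> ext_centroid}"
  have M'I: "(z + c * x, v + c * q) \<in> M'" if "(z, v) \<in> M" "c \<in> ext_centroid" for z v c
    unfolding M'_def using that by blast
  have MI: "(c, c * p) \<in> M" if "c \<in> ext_centroid" for c
    unfolding M_def using that by blast
  have "partial_C_functional M"
    unfolding partial_C_functional_def M_def
    using p ext_centroid_add ext_centroid_mult by (fastforce simp: distrib_right mult.assoc)
  moreover have "\<forall>v. (x, v) \<notin> M" using x unfolding M_def by blast
  ultimately obtain \<phi> where "C_functional \<phi>" and \<phi>: "\<forall>y w. (y, w) \<in> M' \<longrightarrow> \<phi> y = w"
    using partial_C_functional_extends_to_C_functional[OF field]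
      partial_C_functional_adjoin[OF field _ _ q]
    unfolding M'_def by blast
  moreover have "\<phi> 1 = p"
    using \<phi> M'I[OF MI[OF one_in_ext_centroid] zero_in_ext_centroid] by simp
  moreover have "\<phi> x = q"
    using \<phi> M'I[OF MI[OF zero_in_ext_centroid] one_in_ext_centroid] by simp
  ultimately show ?thesis by blast
qed


lemma C_functional_mult_right:
  assumes "C_functional A" "c \<in> ext_centroid"
  shows "A (x * c) = c * A x"
  using assms ext_centroid_commute[of c x] unfolding C_functional_def by metis

lemma C_functional_uminus:
  assumes "C_functional A"
  shows "A (- x) = - A x"
proof -
  have "A 0 = 0"
    using assms unfolding C_functional_def by (metis add_cancel_right_right add_0)
  moreover have "A (x + - x) = A x + A (- x)" using assms unfolding C_functional_def by blast
  ultimately have "A x + A (- x) = 0" by simp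
  then show ?thesis by (metis add.inverse_unique)
qed

section \<open>The identity as a generalized polynomial\<close>

definition perm_word :: "nat \<Rightarrow> (nat \<Rightarrow> nat) \<Rightarrow> nat list" where
  "perm_word n s = map s [0..<n]"

definition perm_monomial :: "nat \<Rightarrow> (nat \<Rightarrow> 'a::ring_1) \<Rightarrow> (nat \<Rightarrow> nat) \<Rightarrow> 'a" where
  "perm_monomial n z s = prod_list (map (\<lambda>i. z (s i)) [0..<n])"

definition coeff_block :: "nat \<Rightarrow> 'a::ring_1 \<Rightarrow> 'a list" where
  "coeff_block n c = replicate (n - 1) 1 @ [c]"

text \<open>sandwich_gmono n u0 u1 u2 s t encodes the generalized monomial u0 m_s u1 m_t u2, where
  m_s = X_(s 0) ... X_(s (n - 1)): u1 and u2 are the coefficients at positions n and 2 n, all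
  other inner coefficients are 1.  If ps lists the permutations of {..<n} without repetition,
  sandwich_gpoly n \<alpha> ps (u0, u1, u2) expands u0 f u1 f u2 for the multilinear polynomial f
  with coefficients \<alpha>.\<close>

definition sandwich_gmono ::
    "nat \<Rightarrow> 'a::ring_1 \<Rightarrow> 'a \<Rightarrow> 'a \<Rightarrow> (nat \<Rightarrow> nat) \<Rightarrow> (nat \<Rightarrow> nat) \<Rightarrow> 'a list \<times> nat list" where
  "sandwich_gmono n u0 u1 u2 s t =
     (u0 # coeff_block n u1 @ coeff_block n u2, perm_word n s @ perm_word n t)"

definition sandwich_gpoly ::
    "nat \<Rightarrow> ((nat \<Rightarrow> nat) \<Rightarrow> 'a::ring_1) \<Rightarrow> (nat \<Rightarrow> nat) list \<Rightarrow> 'a \<times> 'a \<times> 'a \<Rightarrow> 'a gpoly" where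
  "sandwich_gpoly n \<alpha> ps u = (case u of (u0, u1, u2) \<Rightarrow>
     map (\<lambda>(s, t). sandwich_gmono n (u0 * \<alpha> s * \<alpha> t) u1 u2 s t) (List.product ps ps))"

definition sandwich_sum_gpoly ::
    "nat \<Rightarrow> ((nat \<Rightarrow> nat) \<Rightarrow> 'a::ring_1) \<Rightarrow> (nat \<Rightarrow> nat) list \<Rightarrow> ('a \<times> 'a \<times> 'a) list \<Rightarrow> 'a gpoly" where
  "sandwich_sum_gpoly n \<alpha> ps T = concat (map (sandwich_gpoly n \<alpha> ps) T)"

lemma length_coeff_block [simp]: "n \<ge> 1 \<Longrightarrow> length (coeff_block n c) = n"
  by (simp add: coeff_block_def)

lemma length_perm_word [simp]: "length (perm_word n s) = n"
  by (simp add: perm_word_def)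

lemma perm_word_inj:
  assumes "s permutes {..<n}" "t permutes {..<n}" "perm_word n s = perm_word n t"
  shows "s = t"
proof
  fix i show "s i = t i"
  proof (cases "i < n")
    case True
    then show ?thesis using assms(3) unfolding perm_word_def map_eq_conv by auto
  next
    case False
    then show ?thesis using assms(1,2) by (simp add: permutes_not_in)
  qed
qed

lemma gpoly_wf_sandwich_sum_gpoly: "n \<ge> 1 \<Longrightarrow> gpoly_wf (sandwich_sum_gpoly n \<alpha> ps T)"
  by (auto simp: gpoly_wf_def sandwich_sum_gpoly_def sandwich_gpoly_def sandwich_gmono_def
      split: prod.splits)

lemma prod_list_map2_replicate_one:
  "length ws = Suc m \<Longrightarrow>
    prod_list (map2 (\<lambda>w u. z w * u) ws (replicate m 1 @ [c])) = prod_list (map z ws) * c"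
proof (induction m arbitrary: ws)
  case 0
  then show ?case by (cases ws) auto
next
  case (Suc m)
  then obtain w ws' where "ws = w # ws'" "length ws' = Suc m" by (cases ws) auto
  with Suc.IH show ?case by (simp add: mult.assoc)
qed

lemma gmono_eval_sandwich_gmono:
  assumes "n \<ge> 1"
  shows "(case sandwich_gmono n u0 u1 u2 s t of (us, ws) \<Rightarrow> gmono_eval us ws z)
    = u0 * (perm_monomial n z s * u1) * (perm_monomial n z t * u2)"
proof -
  have block: "prod_list (map2 (\<lambda>w u. z w * u) (perm_word n s) (coeff_block n c))
      = perm_monomial n z s * c" for s and c :: 'a
    using prod_list_map2_replicate_one[of "perm_word n s" "n - 1" z c] assms
    by (simp add: coeff_block_def perm_monomial_def perm_word_def comp_def)
  show ?thesis
    using assms by (simp add: sandwich_gmono_def gmono_eval_def zip_append block mult.assoc)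
qed

lemma gpoly_eval_sandwich_gpoly:
  assumes "n \<ge> 1" and \<alpha>: "\<And>s. s permutes {..<n} \<Longrightarrow> \<alpha> s \<in> ext_centroid"
    and ps: "set ps = {s. s permutes {..<n}}" "distinct ps"
  shows "gpoly_eval (sandwich_gpoly n \<alpha> ps (u0, u1, u2)) z
    = u0 * multilin_eval n \<alpha> z * u1 * multilin_eval n \<alpha> z * u2"
proof -
  define S where "S = {s. s permutes {..<n}}"
  define F where "F s = \<alpha> s * perm_monomial n z s" for s
  have f: "multilin_eval n \<alpha> z = sum F S"
    unfolding multilin_eval_def F_def perm_monomial_def S_def ..
  have summand: "(case sandwich_gmono n (u0 * \<alpha> s * \<alpha> t) u1 u2 s t of (us, ws) \<Rightarrow> gmono_eval us ws z)
      = u0 * F s * u1 * F t * u2" if "s \<in> S" "t \<in> S" for s t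
  proof -
    have "\<alpha> t * (perm_monomial n z s * u1) = perm_monomial n z s * u1 * \<alpha> t"
      using ext_centroid_commute \<alpha> that(2) unfolding S_def by blast
    then show ?thesis
      unfolding gmono_eval_sandwich_gmono[OF assms(1)] F_def by (simp add: mult.assoc)
  qed
  have "gpoly_eval (sandwich_gpoly n \<alpha> ps (u0, u1, u2)) z
      = (\<Sum>p\<in>S \<times> S. (\<lambda>(us, ws). gmono_eval us ws z)
          ((\<lambda>(s, t). sandwich_gmono n (u0 * \<alpha> s * \<alpha> t) u1 u2 s t) p))"
    unfolding gpoly_eval_def sandwich_gpoly_def map_map prod.case
    by (simp only: sum_list_distinct_conv_sum_set[OF distinct_product[OF ps(2) ps(2)]]
        set_product ps(1) comp_def S_def)
  also have "\<dots> = (\<Sum>(s, t)\<in>S \<times> S. u0 * F s * u1 * F t * u2)"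
    by (rule sum.cong) (auto simp: summand)
  also have "\<dots> = (\<Sum>s\<in>S. \<Sum>t\<in>S. u0 * F s * u1 * F t * u2)"
    by (simp add: sum.cartesian_product)
  also have "\<dots> = u0 * sum F S * u1 * sum F S * u2"
    by (simp add: sum_distrib_left sum_distrib_right) (rule sum.swap)
  finally show ?thesis unfolding f .
qed

lemma prod_list_map2_upt_replicate_one:
  assumes "\<And>i. k \<le> i \<Longrightarrow> i < k + m \<Longrightarrow> \<phi> i 1 = 1"
  shows "prod_list (map2 \<phi> [k..<k + Suc m] (replicate m 1 @ [c])) = \<phi> (k + m) (c::'a::ring_1)"
  using assms
proof (induction m arbitrary: k)
  case 0
  then show ?case by simp
next
  case (Suc m)
  have "[k..<k + Suc (Suc m)] = k # [Suc k..<Suc k + Suc m]" by (simp add: upt_conv_Cons)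
  moreover have "prod_list (map2 \<phi> [Suc k..<Suc k + Suc m] (replicate m 1 @ [c])) = \<phi> (Suc k + m) c"
    using Suc.prems by (intro Suc.IH) auto
  moreover have "\<phi> k 1 = 1" using Suc.prems by simp
  ultimately show ?case by (simp del: upt_Suc)
qed

lemma prod_list_map2_sandwich_gmono:
  fixes \<phi> :: "nat \<Rightarrow> 'a::ring_1 \<Rightarrow> 'a"
  assumes "n \<ge> 1" and one: "\<And>i. i \<notin> {0, n, 2 * n} \<Longrightarrow> \<phi> i 1 = 1"
  shows "(case sandwich_gmono n u0 u1 u2 s t of (us, ws) \<Rightarrow> prod_list (map2 \<phi> [0..<length us] us))
    = \<phi> 0 u0 * (\<phi> n u1 * \<phi> (2 * n) u2)"
proof -
  obtain m where m: "n = Suc m" using assms(1) by (cases n) auto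
  have block: "coeff_block n c = replicate m 1 @ [c]" for c :: 'a by (simp add: coeff_block_def m)
  have "prod_list (map2 \<phi> [1..<1 + Suc m] (replicate m 1 @ [u1])) = \<phi> (1 + m) u1"
    by (rule prod_list_map2_upt_replicate_one) (use one m in auto)
  then have first: "prod_list (map2 \<phi> [1..<1 + n] (coeff_block n u1)) = \<phi> n u1"
    using m block by (simp del: upt_Suc)
  have "prod_list (map2 \<phi> [1 + n..<(1 + n) + Suc m] (replicate m 1 @ [u2])) = \<phi> (1 + n + m) u2"
    by (rule prod_list_map2_upt_replicate_one) (use one m in auto)
  moreover have "1 + n + m = 2 * n" "(1 + n) + Suc m = 1 + n + n" using m by simp_all
  ultimately have second: "prod_list (map2 \<phi> [1 + n..<1 + n + n] (coeff_block n u2)) = \<phi> (2 * n) u2"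
    using block by (simp only:)
  have "[0..<Suc (n + n)] = 0 # [1..<1 + n + n]" by (simp add: upt_conv_Cons del: upt_Suc)
  also have "[1..<1 + n + n] = [1..<1 + n] @ [1 + n..<1 + n + n]" by (rule upt_add_eq_append) simp
  finally have "map2 \<phi> [0..<Suc (n + n)] (u0 # coeff_block n u1 @ coeff_block n u2)
      = \<phi> 0 u0 # map2 \<phi> [1..<1 + n] (coeff_block n u1)
          @ map2 \<phi> [1 + n..<1 + n + n] (coeff_block n u2)"
    using assms(1) by (simp add: zip_append del: upt_Suc)
  then show ?thesis
    using assms(1) first second by (simp add: sandwich_gmono_def del: upt_Suc)
qed

lemma sum_list_filter_word_sandwich_gpoly:
  fixes h :: "'a::ring_1 list \<times> nat list \<Rightarrow> 'a"
  assumes ps: "set ps = {s. s permutes {..<n}}" "distinct ps"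
    and s0: "s0 permutes {..<n}" and t0: "t0 permutes {..<n}"
  shows "sum_list (map h (filter (\<lambda>(us, ws). ws = perm_word n s0 @ perm_word n t0)
      (sandwich_gpoly n \<alpha> ps (u0, u1, u2)))) = h (sandwich_gmono n (u0 * \<alpha> s0 * \<alpha> t0) u1 u2 s0 t0)"
proof -
  let ?g = "\<lambda>(s, t). sandwich_gmono n (u0 * \<alpha> s * \<alpha> t) u1 u2 s t"
  have "sum_list (map h (filter (\<lambda>(us, ws). ws = perm_word n s0 @ perm_word n t0)
      (sandwich_gpoly n \<alpha> ps (u0, u1, u2))))
      = (\<Sum>p\<in>set (List.product ps ps).
          if (\<lambda>(us, ws). ws = perm_word n s0 @ perm_word n t0) (?g p) then h (?g p) else 0)"
    unfolding sandwich_gpoly_def prod.case sum_list_map_filter' map_map comp_def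
    by (simp only: sum_list_distinct_conv_sum_set[OF distinct_product[OF ps(2) ps(2)]])
  also have "\<dots> = (\<Sum>p\<in>set (List.product ps ps). if p = (s0, t0) then h (?g p) else 0)"
    using ps(1) by (intro sum.cong refl)
      (auto simp: sandwich_gmono_def dest: perm_word_inj[OF _ s0] perm_word_inj[OF _ t0])
  also have "\<dots> = h (?g (s0, t0))"
    by (subst sum.delta) (use ps(1) s0 t0 in \<open>auto simp: finite_permutations\<close>)
  finally show ?thesis by simp
qed

lemma gpoly_eval_concat: "gpoly_eval (concat Ps) z = (\<Sum>P\<leftarrow>Ps. gpoly_eval P z)"
  by (induction Ps) (simp_all add: gpoly_eval_def)

lemma gpoly_eval_sandwich_sum_gpoly:
  assumes "n \<ge> 1" and "\<And>s. s permutes {..<n} \<Longrightarrow> \<alpha> s \<in> ext_centroid"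
    and "set ps = {s. s permutes {..<n}}" "distinct ps"
  shows "gpoly_eval (sandwich_sum_gpoly n \<alpha> ps T) z
    = (\<Sum>(u0, u1, u2)\<leftarrow>T. u0 * multilin_eval n \<alpha> z * u1 * multilin_eval n \<alpha> z * u2)"
  unfolding sandwich_sum_gpoly_def gpoly_eval_concat map_map
  by (intro arg_cong[where f = sum_list] map_cong) (auto simp: gpoly_eval_sandwich_gpoly[OF assms])

lemma sandwich_sum_gpoly_zero_coeff:
  fixes A B D E :: "'a::ring_1 \<Rightarrow> 'a"
  assumes zero: "gpoly_zero (sandwich_sum_gpoly n \<alpha> ps T)"
    and n: "n \<ge> 1" and ps: "set ps = {s. s permutes {..<n}}" "distinct ps"
    and s0: "s0 permutes {..<n}" and t0: "t0 permutes {..<n}"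
    and \<beta>: "\<alpha> s0 * \<alpha> t0 \<in> ext_centroid"
    and func: "C_functional A" "C_functional B" "C_functional D" "C_functional E" and "E 1 = 1"
  shows "\<alpha> s0 * \<alpha> t0 * (\<Sum>(u0, u1, u2)\<leftarrow>T. A u0 * (B u1 * D u2)) = 0"
proof -
  define \<Phi> where
    "\<Phi> i = (if i = 0 then A else if i = n then B else if i = 2 * n then D else E)" for i
  define h where "h = (\<lambda>(us :: 'a list, ws :: nat list). prod_list (map2 \<Phi> [0..<length us] us))"
  define P where "P = (\<lambda>(us :: 'a list, ws). ws = perm_word n s0 @ perm_word n t0)"
  have "\<forall>i. C_functional (\<Phi> i)" using func by (simp add: \<Phi>_def)
  then have "sum_list (map h (filter P (sandwich_sum_gpoly n \<alpha> ps T))) = 0"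
    using zero unfolding gpoly_zero_def h_def P_def by blast
  moreover have "sum_list (map h (filter P (sandwich_sum_gpoly n \<alpha> ps T)))
      = (\<Sum>(u0, u1, u2)\<leftarrow>T. h (sandwich_gmono n (u0 * \<alpha> s0 * \<alpha> t0) u1 u2 s0 t0))"
    unfolding sandwich_sum_gpoly_def P_def
    by (induction T) (auto simp: sum_list_filter_word_sandwich_gpoly[OF ps s0 t0])
  moreover have "h (sandwich_gmono n (u0 * \<alpha> s0 * \<alpha> t0) u1 u2 s0 t0)
      = \<alpha> s0 * \<alpha> t0 * (A u0 * (B u1 * D u2))" for u0 u1 u2
  proof -
    have one: "\<And>i. i \<notin> {0, n, 2 * n} \<Longrightarrow> \<Phi> i 1 = 1" using \<open>E 1 = 1\<close> by (simp add: \<Phi>_def)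
    have "h (sandwich_gmono n (u0 * \<alpha> s0 * \<alpha> t0) u1 u2 s0 t0)
        = \<Phi> 0 (u0 * \<alpha> s0 * \<alpha> t0) * (\<Phi> n u1 * \<Phi> (2 * n) u2)"
      unfolding h_def by (rule prod_list_map2_sandwich_gmono) (use n one in auto)
    also have "\<dots> = A (u0 * (\<alpha> s0 * \<alpha> t0)) * (B u1 * D u2)"
      using n by (simp add: \<Phi>_def mult.assoc)
    also have "\<dots> = \<alpha> s0 * \<alpha> t0 * (A u0 * (B u1 * D u2))"
      using C_functional_mult_right[OF func(1) \<beta>] by (simp add: mult.assoc)
    finally show ?thesis .
  qed
  ultimately have "(\<Sum>u\<leftarrow>T. \<alpha> s0 * \<alpha> t0 * (case u of (u0, u1, u2) \<Rightarrow> A u0 * (B u1 * D u2))) = 0"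
    by (simp add: case_prod_unfold)
  then show ?thesis by (simp only: sum_list_const_mult)
qed

lemma sandwich_terms_C_functional_witness:
  fixes a1 a2 a3 a4 a5 a6 :: "'a::ring_1"
  assumes field: "\<And>d::'a. d \<in> ext_centroid \<Longrightarrow> d \<noteq> 0 \<Longrightarrow> \<exists>q\<in>ext_centroid. d * q = 1"
    and "(a2 \<notin> ext_centroid \<and> a3 \<notin> ext_centroid) \<or> (a5 \<notin> ext_centroid \<and> a6 \<notin> ext_centroid)"
  shows "\<exists>A B D (E :: 'a \<Rightarrow> 'a).
    C_functional A \<and> C_functional B \<and> C_functional D \<and> C_functional E \<and> E 1 = 1 \<and>
    (\<Sum>(u0, u1, u2)\<leftarrow>[(a1, 1, 1), (a2, a3, 1), (1, a5, a6), (1, a4, 1), (- a5, 1, a6)].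
       A u0 * (B u1 * D u2)) \<in> {1, - 1}"
proof -
  have separate: "\<exists>\<phi>. C_functional \<phi> \<and> \<phi> 1 = p \<and> \<phi> x = q"
    if "x \<notin> ext_centroid" "p \<in> ext_centroid" "q \<in> ext_centroid" for x p q :: 'a
    by (rule C_functional_exists) (use field that in auto)
  show ?thesis
    using assms(2)
  proof
    assume a: "a2 \<notin> ext_centroid \<and> a3 \<notin> ext_centroid"
    obtain A where A: "C_functional A" "A 1 = 0" "A a2 = 1" using separate[of a2 0 1] a by auto
    obtain B where B: "C_functional B" "B 1 = 0" "B a3 = 1" using separate[of a3 0 1] a by auto
    obtain E :: "'a \<Rightarrow> 'a" where E: "C_functional E" "E 1 = 1" using separate[of a2 1 0] a by auto
    show ?thesis
      by (rule exI[where x = A], rule exI[where x = B], rule exI[where x = E],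
          rule exI[where x = E]) (simp add: A B E)
  next
    assume a: "a5 \<notin> ext_centroid \<and> a6 \<notin> ext_centroid"
    obtain A where A: "C_functional A" "A 1 = 0" "A a5 = 1" using separate[of a5 0 1] a by auto
    obtain D where D: "C_functional D" "D 1 = 0" "D a6 = 1" using separate[of a6 0 1] a by auto
    obtain E :: "'a \<Rightarrow> 'a" where E: "C_functional E" "E 1 = 1" using separate[of a5 1 0] a by auto
    show ?thesis
      by (rule exI[where x = A], rule exI[where x = E], rule exI[where x = D],
          rule exI[where x = E]) (simp add: A D E C_functional_uminus[OF A(1)])
  qed
qed

lemma not_central_valued_nonzero_coeff:
  assumes "multilin_coeffs n \<alpha>" and "\<not> central_valued R n \<alpha>"
  obtains s where "n \<ge> 1" "s permutes {..<n}" "\<alpha> s \<noteq> 0"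
proof -
  have "n \<noteq> 0"
  proof
    assume "n = 0"
    then have "multilin_eval n \<alpha> z = \<alpha> id" for z by (simp add: multilin_eval_def)
    moreover have "\<alpha> id \<in> ext_centroid" using assms(1) unfolding multilin_coeffs_def by simp
    ultimately show False using assms(2) unfolding central_valued_def by simp
  qed
  moreover have "\<exists>s. s permutes {..<n} \<and> \<alpha> s \<noteq> 0"
  proof (rule ccontr)
    assume "\<not> ?thesis"
    then have "multilin_eval n \<alpha> z = 0" for z by (simp add: multilin_eval_def)
    then show False using assms(2) unfolding central_valued_def by simp
  qed
  ultimately show ?thesis using that by auto
qed

theorem lemma3:
  fixes R :: "'a::ring_1 set" and n :: nat and \<alpha> :: "(nat \<Rightarrow> nat) \<Rightarrow> 'a"
    and a1 a2 a3 a4 a5 a6 :: 'a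
  assumes "prime_ring R" and "noncommutative R" and "char_not_2 R"
    and "is_utumi_quotient_ring R"
    and "multilin_coeffs n \<alpha>" and "\<not> central_valued R n \<alpha>"
    and "\<forall>z. (\<forall>i<n. z i \<in> R) \<longrightarrow>
           (let f = multilin_eval n \<alpha> z in
              a1 * f * f + a2 * f * a3 * f + f * a5 * f * a6 + f * a4 * f - a5 * f * f * a6 = 0)"
    and "\<not> satisfies_nontrivial_GPI R"
  shows "(a2 \<in> ext_centroid \<and> a5 \<in> ext_centroid) \<or> (a2 \<in> ext_centroid \<and> a6 \<in> ext_centroid) \<or>
         (a3 \<in> ext_centroid \<and> a5 \<in> ext_centroid) \<or> (a3 \<in> ext_centroid \<and> a6 \<in> ext_centroid)"
proof (rule ccontr)
  assume "\<not> ?thesis"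
  then have noncentral:
    "(a2 \<notin> ext_centroid \<and> a3 \<notin> ext_centroid) \<or> (a5 \<notin> ext_centroid \<and> a6 \<notin> ext_centroid)"
    by blast
  have field: "\<And>c::'a. c \<in> ext_centroid \<Longrightarrow> c \<noteq> 0 \<Longrightarrow> \<exists>q\<in>ext_centroid. c * q = 1"
    using ext_centroid_inverse[OF assms(1,4)] by blast
  have \<alpha>: "\<And>s. s permutes {..<n} \<Longrightarrow> \<alpha> s \<in> ext_centroid"
    using assms(5) unfolding multilin_coeffs_def by blast
  obtain s0 where n: "n \<ge> 1" and s0: "s0 permutes {..<n}" "\<alpha> s0 \<noteq> 0"
    using not_central_valued_nonzero_coeff[OF assms(5,6)] by blast
  obtain ps where ps: "set ps = {s. s permutes {..<n}}" "distinct ps"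
    using finite_distinct_list[OF finite_permutations] by blast
  define T where "T = [(a1, 1, 1), (a2, a3, 1), (1, a5, a6), (1, a4, 1), (- a5, 1, a6)]"
  have "gpoly_eval (sandwich_sum_gpoly n \<alpha> ps T) z = 0" if "\<forall>i. z i \<in> R" for z
    using assms(7) that
    by (simp add: gpoly_eval_sandwich_sum_gpoly[OF n \<alpha> ps] T_def Let_def algebra_simps)
  then have "gpoly_zero (sandwich_sum_gpoly n \<alpha> ps T)"
    using assms(8) gpoly_wf_sandwich_sum_gpoly[OF n] unfolding satisfies_nontrivial_GPI_def by blast
  moreover obtain A B D E :: "'a \<Rightarrow> 'a"
    where "C_functional A" "C_functional B" "C_functional D" "C_functional E" "E 1 = 1"
    and witness: "(\<Sum>(u0, u1, u2)\<leftarrow>T. A u0 * (B u1 * D u2)) \<in> {1, - 1}"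
    using sandwich_terms_C_functional_witness[OF field noncentral] unfolding T_def by blast
  ultimately have "\<alpha> s0 * \<alpha> s0 * (\<Sum>(u0, u1, u2)\<leftarrow>T. A u0 * (B u1 * D u2)) = 0"
    using sandwich_sum_gpoly_zero_coeff[OF _ n ps s0(1) s0(1)] ext_centroid_mult \<alpha>[OF s0(1)]
    by blast
  then have "\<alpha> s0 * \<alpha> s0 = 0" using witness by auto
  then show False using ext_centroid_mult_eq_0D[OF field \<alpha>[OF s0(1)] s0(2)] s0(2) by blast
qed

end
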